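(* For the gradient-descent approximate policy iteration sequence described in the context, let $c:=\frac{\sqrt{|S|}\,\|\Phi\|_\infty}{\sigma_{\min,\Phi}}$, $$\beta:=\alpha^{m+H-1}\delta_{FV}+c\,\alpha_{GD,\gamma}^\eta(\alpha^{m+H-1}\delta_{FV}+1),$$ $$\tau:=(1+c\,\alpha_{GD,\gamma}^\eta)\Big(\frac{\alpha^m+\alpha^{m+H-1}}{1-\alpha}\delta_{FV}+\delta_{app}+\delta_{FV}\epsilon_{PE}\Big)+\frac{c\,\alpha_{GD,\gamma}^\eta}{1-\alpha}.$$ Then for every $k\ge1$, $$\|J^{\mu_k}-J_k\|_\infty\le\beta\,\|J_{k-1}-J^{\mu_{k-1}}\|_\infty+\tau.$$
   Context: Consider a Markov decision process with finite state space $S$ (with $|S|$ states), finite action space $A$, transition probabilities $P_{ij}(a)$, rewards $r(s,a)\in[0,1]$, and discount factor $\alpha\in(0,1)$. A (deterministic stationary) policy is a map $\mu:S\to A$; its value is $J^\mu(s)=E[\sum_{t\ge0}\alpha^t r(s_t,\mu(s_t))\mid s_0=s]$, and $J^*(s)=\max_\mu J^\mu(s)$. For a policy $\mu$, $(T_\mu J)(s)=r(s,\mu(s))+\alpha\sum_j P_{sj}(\mu(s))J(j)$; the Bellman operator is $(TJ)(s)=\max_{a\in A}\{r(s,a)+\alpha\sum_j P_{sj}(a)J(j)\}$; powers denote repeated application. $\|\cdot\|_\infty$ denotes the max norm and the induced matrix norm; $\|\cdot\|_2$ the Euclidean norm. Gradient-descent approximate policy iteration: fix integers $m\ge1$, $H\ge1$,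 $\eta\ge1$, a step size $\gamma>0$, constants $\epsilon_{LA},\epsilon_{PE}\ge0$, a feature matrix $\Phi\in\mathbb{R}^{|S|\times d}$ whose row $i$ is $\phi(i)^\top$, and subsets $D_k\subseteq S$ ($k\ge0$) such that $\{\phi(i)\}_{i\in D_k}$ has rank $d$. Let $\Phi_{D_k}$ be the submatrix of $\Phi$ with rows indexed by $D_k$, $P_k\in\{0,1\}^{|D_k|\times|S|}$ the matrix selecting the coordinates in $D_k$, and $\mathcal{M}_{k+1}:=\Phi(\Phi_{D_k}^\top\Phi_{D_k})^{-1}\Phi_{D_k}^\top P_k$. Start with $\theta_0\in\mathbb{R}^d$, $J_0=\Phi\theta_0$, and an arbitrary policy $\mu_0$. For each $k\ge0$: $\mu_{k+1}$ is any policy with $\|T^HJ_k-T_{\mu_{k+1}}T^{H-1}J_k\|_\infty\le\epsilon_{LA}$; $w_{k+1}\in\mathbb{R}^{|S|}$ satisfies $w_{k+1}(i)=0$ for $i\notin D_k$ and $\|w_{k+1}\|_\infty\le\epsilon_{PE}$; $\hat J_{k+1}:=T^m_{\mu_{k+1}}T^{H-1}J_k+w_{k+1}$; set $\theta_{k+1,0}=\theta_k$ and for $\ell=1,\dots,\eta$, $\theta_{k+1,\ell}=\theta_{k+1,\ell-1}-\gamma\big(\Phi_{D_k}^\top\Phi_{D_k}\theta_{k+1,\ell-1}-\Phi_{D_k}^\top P_k\hat J_{k+1}\big)$; then $\theta_{k+1}=\theta_{k+1,\eta}$ and $J_{k+1}=\Phi\theta_{k+1}$. Define $\delta_{FV}:=\sup_{k\ge1}\|\mathcal{M}_k\|_\infty$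 (assumed finite), $\delta_{app}:=\sup_{k\ge1}\sup_\mu\|\mathcal{M}_kJ^\mu-J^\mu\|_\infty$ (inner supremum over all policies), $\alpha_{GD,\gamma}:=\sup_{k\ge0}\max_i|1-\gamma\lambda_i(\Phi_{D_k}^\top\Phi_{D_k})|$ where $\lambda_i$ is the $i$-th eigenvalue, and $\sigma_{\min,\Phi}$ the smallest singular value of $\Phi$. *)

theory Defs
  imports "HOL-Analysis.Analysis"
begin

text \<open>Value vectors are elements of real^'s; the feature matrix is Phi :: real^'d^'s
  (row i is phi(i)); parameter vectors are real^'d.\<close>

definition sup_norm :: "real^'n \<Rightarrow> real" where
  "sup_norm x = Max (range (\<lambda>i. \<bar>x $ i\<bar>))"

definition mat_sup_norm :: "real^'n^'m \<Rightarrow> real" where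
  "mat_sup_norm A = Max (range (\<lambda>i. \<Sum>j\<in>UNIV. \<bar>A $ i $ j\<bar>))"

definition eigenvalues :: "real^'n^'n \<Rightarrow> real set" where
  "eigenvalues A = {l. \<exists>v. v \<noteq> 0 \<and> A *v v = l *\<^sub>R v}"

definition sigma_min :: "real^'d^'s \<Rightarrow> real" where
  "sigma_min Phi = sqrt (Min (eigenvalues (transpose Phi ** Phi)))"

text \<open>Diagonal 0/1 matrix P_D^T P_D selecting the coordinates in D.\<close>
definition sel_diag :: "'s set \<Rightarrow> real^'s^'s" where
  "sel_diag D = (\<chi> i j. if i = j \<and> i \<in> D then 1 else 0)"

text \<open>Phi_D^T Phi_D = Phi^T P_D^T P_D Phi.\<close>
definition gram :: "real^'d^'s \<Rightarrow> 's set \<Rightarrow> real^'d^'d" where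
  "gram Phi D = transpose Phi ** sel_diag D ** Phi"

definition Mproj :: "real^'d^'s \<Rightarrow> 's set \<Rightarrow> real^'s^'s" where
  "Mproj Phi D = Phi ** matrix_inv (gram Phi D) ** transpose Phi ** sel_diag D"

definition Tmu :: "('s \<Rightarrow> 'a \<Rightarrow> real) \<Rightarrow> ('s \<Rightarrow> 'a \<Rightarrow> 's \<Rightarrow> real) \<Rightarrow> real
    \<Rightarrow> ('s::finite \<Rightarrow> 'a) \<Rightarrow> real^'s \<Rightarrow> real^'s" where
  "Tmu r P alpha mu J = (\<chi> s. r s (mu s) + alpha * (\<Sum>j\<in>UNIV. P s (mu s) j * J $ j))"

definition Tbell :: "('s \<Rightarrow> 'a::finite \<Rightarrow> real) \<Rightarrow> ('s \<Rightarrow> 'a \<Rightarrow> 's \<Rightarrow> real) \<Rightarrow> real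
    \<Rightarrow> real^'s::finite \<Rightarrow> real^'s" where
  "Tbell r P alpha J = (\<chi> s. Max (range (\<lambda>a. r s a + alpha * (\<Sum>j\<in>UNIV. P s a j * J $ j))))"

text \<open>Expected reward at time t under policy mu started in s:
  E[r(s_t, mu(s_t)) | s_0 = s] = (P_mu^t r_mu)(s).\<close>
definition exp_reward :: "('s \<Rightarrow> 'a \<Rightarrow> real) \<Rightarrow> ('s \<Rightarrow> 'a \<Rightarrow> 's \<Rightarrow> real)
    \<Rightarrow> ('s::finite \<Rightarrow> 'a) \<Rightarrow> nat \<Rightarrow> 's \<Rightarrow> real" where
  "exp_reward r P mu t = ((\<lambda>f s. \<Sum>j\<in>UNIV. P s (mu s) j * f j) ^^ t) (\<lambda>s. r s (mu s))"

definition Jpol :: "('s \<Rightarrow> 'a \<Rightarrow> real) \<Rightarrow> ('s \<Rightarrow> 'a \<Rightarrow> 's \<Rightarrow> real) \<Rightarrow> real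
    \<Rightarrow> ('s::finite \<Rightarrow> 'a) \<Rightarrow> real^'s" where
  "Jpol r P alpha mu = (\<chi> s. \<Sum>t. alpha ^ t * exp_reward r P mu t s)"

definition gd_iter :: "real^'d^'s \<Rightarrow> 's set \<Rightarrow> real \<Rightarrow> nat \<Rightarrow> real^'s \<Rightarrow> real^'d \<Rightarrow> real^'d" where
  "gd_iter Phi D gamma eta Jhat theta =
     ((\<lambda>th. th - gamma *\<^sub>R (gram Phi D *v th - transpose Phi *v (sel_diag D *v Jhat))) ^^ eta) theta"

end

theory Submission
  imports Defs
begin

text \<open>The target \<open>\<hat>J\<^sub>k\<close> of the k-th regression is close to \<open>J\<^sup>\<mu>\<^sup>k\<close>: the operator
  \<open>T\<^sub>\<mu>\<^sub>k\<close> is an \<open>\<alpha>\<close>-contraction in the max-norm fixing \<open>J\<^sup>\<mu>\<^sup>k\<close>, \<open>T\<close> is an \<open>\<alpha>\<close>-contraction,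
  and all value functions in sight lie in the box \<open>[0, 1/(1-\<alpha>)]\<close>. The projection \<open>M\<^sub>k\<close>
  of the target then costs a factor \<open>\<delta>\<^sub>F\<^sub>V\<close> plus \<open>\<delta>\<^sub>a\<^sub>p\<^sub>p\<close>. Gradient descent does not reach
  the projection exactly: the parameter error to the least-squares solution contracts
  by \<open>max\<^sub>i |1 - \<gamma>\<lambda>\<^sub>i|\<close> per step in the Euclidean norm, and passing between the Euclidean
  norm of \<open>\<theta>\<close> and the max-norm of \<open>\<Phi>\<theta>\<close> costs the factor
  \<open>c = \<surd>|S| \<parallel>\<Phi>\<parallel>\<^sub>\<infinity> / \<sigma>\<^sub>m\<^sub>i\<^sub>n\<close>.\<close>

section \<open>The max-norm\<close>

lemma sup_norm_component_le: "\<bar>x $ i\<bar> \<le> sup_norm (x::real^'n)"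
  unfolding sup_norm_def by (rule Max_ge) auto

lemma sup_norm_leI: "(\<And>i. \<bar>x $ i\<bar> \<le> c) \<Longrightarrow> sup_norm (x::real^'n) \<le> c"
  unfolding sup_norm_def by (subst Max_le_iff) auto

lemma sup_norm_nonneg: "0 \<le> sup_norm (x::real^'n)"
  using sup_norm_component_le[of x] abs_ge_zero order_trans by blast

lemma sup_norm_add_le: "sup_norm ((x::real^'n) + y) \<le> sup_norm x + sup_norm y"
  by (rule sup_norm_leI)
    (metis abs_triangle_ineq add_mono order_trans sup_norm_component_le vector_add_component)

lemma sup_norm_minus_commute: "sup_norm ((x::real^'n) - y) = sup_norm (y - x)"
  by (intro antisym sup_norm_leI)
    (metis abs_minus_commute sup_norm_component_le vector_minus_component)+

lemma sup_norm_diff_triangle: "sup_norm ((x::real^'n) - z) \<le> sup_norm (x - y) + sup_norm (y - z)"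
  by (metis diff_add_cancel add_diff_eq sup_norm_add_le diff_add_eq)

lemma sup_norm_le_norm: "sup_norm (x::real^'n) \<le> norm x"
  by (rule sup_norm_leI) (rule component_le_norm_cart)

lemma norm_le_sqrt_card_sup_norm: "norm (x::real^'n) \<le> sqrt (real CARD('n)) * sup_norm x"
proof -
  have "norm x = sqrt (\<Sum>i\<in>UNIV. (x$i)^2)" by (simp add: norm_vec_def L2_set_def)
  also have "\<dots> \<le> sqrt (\<Sum>i\<in>(UNIV::'n set). (sup_norm x)^2)"
    by (intro real_sqrt_le_mono sum_mono)
      (metis abs_le_square_iff sup_norm_component_le abs_of_nonneg sup_norm_nonneg)
  also have "\<dots> = sqrt (real CARD('n)) * sup_norm x"
    by (simp add: real_sqrt_mult sup_norm_nonneg)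
  finally show ?thesis .
qed

lemma mat_sup_norm_nonneg: "0 \<le> mat_sup_norm (A::real^'n^'m)"
proof -
  obtain i :: 'm where True by simp
  have "0 \<le> (\<Sum>j\<in>UNIV. \<bar>A$i$j\<bar>)" by (simp add: sum_nonneg)
  also have "\<dots> \<le> mat_sup_norm A" unfolding mat_sup_norm_def by (rule Max_ge) auto
  finally show ?thesis .
qed

lemma sup_norm_matrix_vector_mult_le:
  "sup_norm ((A::real^'n^'m) *v x) \<le> mat_sup_norm A * sup_norm x"
proof (rule sup_norm_leI)
  fix i
  have "\<bar>(A *v x) $ i\<bar> = \<bar>\<Sum>j\<in>UNIV. A$i$j * x$j\<bar>" by (simp add: matrix_vector_mult_def)
  also have "\<dots> \<le> (\<Sum>j\<in>UNIV. \<bar>A$i$j\<bar> * sup_norm x)"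
    by (rule order_trans[OF sum_abs sum_mono]) (simp add: abs_mult mult_left_mono sup_norm_component_le)
  also have "\<dots> = (\<Sum>j\<in>UNIV. \<bar>A$i$j\<bar>) * sup_norm x" by (simp add: sum_distrib_right)
  also have "\<dots> \<le> mat_sup_norm A * sup_norm x"
    unfolding mat_sup_norm_def by (intro mult_right_mono Max_ge) (auto simp: sup_norm_nonneg)
  finally show "\<bar>(A *v x) $ i\<bar> \<le> mat_sup_norm A * sup_norm x" .
qed

lemma sup_norm_matrix_vector_mult_diff_le:
  "sup_norm ((A::real^'n^'n) *v x - y) \<le> mat_sup_norm A * sup_norm (x - y) + sup_norm (A *v y - y)"
proof -
  have "A *v x - y = A *v (x - y) + (A *v y - y)" by (simp add: matrix_vector_mult_diff_distrib)
  then have "sup_norm (A *v x - y) \<le> sup_norm (A *v (x - y)) + sup_norm (A *v y - y)"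
    by (simp only: sup_norm_add_le)
  then show ?thesis using sup_norm_matrix_vector_mult_le[of A "x - y"] by linarith
qed

lemma funpow_contraction:
  fixes F :: "real^'n \<Rightarrow> real^'n"
  assumes contr: "\<And>x y. sup_norm (F x - F y) \<le> q * sup_norm (x - y)" and "0 \<le> q"
  shows "sup_norm ((F ^^ n) x - (F ^^ n) y) \<le> q ^ n * sup_norm (x - y)"
proof (induction n)
  case (Suc n)
  have "sup_norm ((F ^^ Suc n) x - (F ^^ Suc n) y) \<le> q * sup_norm ((F ^^ n) x - (F ^^ n) y)"
    using contr[of "(F ^^ n) x" "(F ^^ n) y"] by simp
  also have "\<dots> \<le> q * (q ^ n * sup_norm (x - y))" using Suc \<open>0 \<le> q\<close> by (simp add: mult_left_mono)
  finally show ?case by simp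
qed simp

section \<open>Symmetric matrices\<close>

lemma transpose_minus: "transpose ((A::real^'n^'m) - B) = transpose A - transpose B"
  by (simp add: transpose_def vec_eq_iff)

lemma transpose_uminus: "transpose (- (A::real^'n^'m)) = - transpose A"
  by (simp add: transpose_def vec_eq_iff)

lemma inner_transpose_right: "x \<bullet> (transpose A *v z) = (A *v x) \<bullet> (z::real^'m)"
proof -
  have "x \<bullet> (transpose A *v z) = (z v* A) \<bullet> x" by (simp add: inner_commute)
  also have "\<dots> = z \<bullet> (A *v x)" by (rule dot_lmul_matrix)
  finally show ?thesis by (simp add: inner_commute)
qed

lemma inner_symmetric_matrix:
  fixes A :: "real^'n^'n"
  assumes "transpose A = A"
  shows "x \<bullet> (A *v y) = (A *v x) \<bullet> y"
  using inner_transpose_right[of x A y] assms by simp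

lemma psd_quadratic_form_zero:
  fixes Q :: "real^'n^'n"
  assumes sym: "transpose Q = Q" and psd: "\<And>x. 0 \<le> x \<bullet> (Q *v x)" and zero: "x0 \<bullet> (Q *v x0) = 0"
  shows "Q *v x0 = 0"
proof -
  define z where "z = Q *v x0"
  define a where "a = z \<bullet> z"
  define b where "b = z \<bullet> (Q *v z)"
  have b0: "0 \<le> b" using psd b_def by simp
  have x0z: "x0 \<bullet> (Q *v z) = a" using inner_symmetric_matrix[OF sym, of x0 z] by (simp add: z_def a_def)
  have expand: "(x0 + t *\<^sub>R z) \<bullet> (Q *v (x0 + t *\<^sub>R z)) = 2 * t * a + t^2 * b" for t
    using zero x0z by (simp add: matrix_vector_right_distrib matrix_vector_mult_scaleR inner_add_left
        inner_add_right algebra_simps power2_eq_square a_def b_def z_def[symmetric] inner_commute)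
  text \<open>Minimise the quadratic \<open>t \<mapsto> 2ta + t\<^sup>2b \<ge> 0\<close> (up to the harmless shift \<open>b + 1\<close>).\<close>
  define t where "t = - a / (b + 1)"
  have h0: "0 \<le> 2 * t * a + t^2 * b" using psd[of "x0 + t *\<^sub>R z"] expand by simp
  have bp: "b + 1 > 0" using b0 by simp
  have tb: "t * (b + 1) = - a" using bp by (simp add: t_def)
  have "(2 * t * a + t^2 * b) * (b + 1)^2 = 2 * a * (t * (b + 1)) * (b + 1) + (t * (b + 1))^2 * b"
    by (simp add: algebra_simps power2_eq_square)
  also have "\<dots> = 0 - a^2 * (b + 2)" unfolding tb by (simp add: algebra_simps power2_eq_square)
  finally have "0 \<le> 0 - a^2 * (b + 2)" using h0 bp by (metis mult_nonneg_nonneg zero_le_power2)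
  then have "a^2 \<le> 0" using b0 by (simp add: mult_le_0_iff)
  then show ?thesis by (simp add: a_def z_def)
qed

lemma finite_eigenvalues_symmetric:
  fixes A :: "real^'n^'n"
  assumes sym: "transpose A = A"
  shows "finite (eigenvalues A)"
proof -
  define v where "v l = (SOME v. v \<noteq> 0 \<and> A *v v = l *\<^sub>R v)" for l
  have v: "v l \<noteq> 0 \<and> A *v v l = l *\<^sub>R v l" if "l \<in> eigenvalues A" for l
  proof -
    from that obtain w where "w \<noteq> 0 \<and> A *v w = l *\<^sub>R w" unfolding eigenvalues_def by blast
    then show ?thesis unfolding v_def by (rule someI)
  qed
  have inj: "inj_on v (eigenvalues A)"
  proof (rule inj_onI)
    fix l1 l2 assume "l1 \<in> eigenvalues A" "l2 \<in> eigenvalues A" "v l1 = v l2"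
    then have "l1 *\<^sub>R v l1 = l2 *\<^sub>R v l1" "v l1 \<noteq> 0" using v by metis+
    then show "l1 = l2" by (metis scaleR_cancel_right)
  qed
  have orth: "pairwise orthogonal (v ` eigenvalues A)"
  proof (rule pairwiseI, clarify)
    fix l1 l2 assume l: "l1 \<in> eigenvalues A" "l2 \<in> eigenvalues A" "v l1 \<noteq> v l2"
    then have "l1 \<noteq> l2" by auto
    have "l1 * (v l1 \<bullet> v l2) = (A *v v l1) \<bullet> v l2" using v[OF l(1)] by simp
    also have "\<dots> = v l1 \<bullet> (A *v v l2)" using inner_symmetric_matrix[OF sym] by metis
    also have "\<dots> = l2 * (v l1 \<bullet> v l2)" using v[OF l(2)] by simp
    finally show "orthogonal (v l1) (v l2)" using \<open>l1 \<noteq> l2\<close> unfolding orthogonal_def by simp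
  qed
  have "0 \<notin> v ` eigenvalues A" using v by auto
  then have "independent (v ` eigenvalues A)" using orth pairwise_orthogonal_independent by blast
  then have "finite (v ` eigenvalues A)" using independent_imp_finite by blast
  then show ?thesis using inj finite_imageD by blast
qed

text \<open>The minimum of the Rayleigh quotient over the unit sphere is attained, and the
  minimiser is an eigenvector.\<close>
lemma rayleigh_min_eigenvalue:
  fixes A :: "real^'n^'n"
  assumes sym: "transpose A = A"
  shows "\<exists>l\<in>eigenvalues A. \<forall>x. l * (x \<bullet> x) \<le> x \<bullet> (A *v x)"
proof -
  let ?f = "\<lambda>x. x \<bullet> (A *v x)"
  have ne: "sphere (0::real^'n) 1 \<noteq> {}" by (simp add: sphere_def) (metis norm_axis_1)
  have cont: "continuous_on (sphere 0 1) ?f" by (intro continuous_intros)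
  obtain x0 where x0: "x0 \<in> sphere 0 1" and min: "\<And>y. y \<in> sphere 0 1 \<Longrightarrow> ?f x0 \<le> ?f y"
    using continuous_attains_inf[OF compact_sphere ne cont] by blast
  define m where "m = ?f x0"
  have bound: "m * (x \<bullet> x) \<le> ?f x" for x
  proof (cases "x = 0")
    case False
    define y where "y = (1 / norm x) *\<^sub>R x"
    have "y \<in> sphere 0 1" using False by (simp add: y_def)
    then have "m \<le> ?f y" using min m_def by blast
    also have "?f y = ?f x / (norm x)^2"
      by (simp add: y_def matrix_vector_mult_scaleR power2_eq_square)
    finally have "m * (norm x)^2 \<le> ?f x" using False by (simp add: field_simps)
    then show ?thesis by (simp add: dot_square_norm)
  qed simp
  define Q where "Q = A - m *\<^sub>R mat 1"
  have Qx: "Q *v x = A *v x - m *\<^sub>R x" for x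
    by (simp add: Q_def matrix_vector_mult_diff_rdistrib scaleR_matrix_vector_assoc[symmetric])
  have symQ: "transpose Q = Q" using sym by (simp add: Q_def transpose_minus transpose_scalar)
  have "Q *v x0 = 0"
  proof (rule psd_quadratic_form_zero[OF symQ])
    show "0 \<le> x \<bullet> (Q *v x)" for x using bound[of x] by (simp add: Qx inner_diff_right)
    show "x0 \<bullet> (Q *v x0) = 0" using x0 by (simp add: Qx inner_diff_right m_def dot_square_norm)
  qed
  then have "A *v x0 = m *\<^sub>R x0" by (simp add: Qx)
  moreover have "x0 \<noteq> 0" using x0 by auto
  ultimately have "m \<in> eigenvalues A" unfolding eigenvalues_def by blast
  then show ?thesis using bound by blast
qed

text \<open>The largest eigenvalue \<open>s\<^sup>2\<close> of \<open>B\<^sup>2\<close> comes from an eigenvalue \<open>\<plusminus>s\<close> of \<open>B\<close>: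
  for an eigenvector \<open>x\<close> of \<open>B\<^sup>2\<close>, either \<open>Bx + sx\<close> vanishes or it is an eigenvector
  of \<open>B\<close> with eigenvalue \<open>s\<close>.\<close>
lemma symmetric_norm_le_eigenvalue:
  fixes B :: "real^'n^'n"
  assumes sym: "transpose B = B"
  shows "\<exists>l\<in>eigenvalues B. \<forall>x. norm (B *v x) \<le> \<bar>l\<bar> * norm x"
proof -
  define C where "C = B ** B"
  have symC: "transpose (- C) = - C"
    using sym by (simp add: C_def matrix_transpose_mul transpose_uminus)
  have quad: "x \<bullet> (C *v x) = (B *v x) \<bullet> (B *v x)" for x
    using inner_symmetric_matrix[OF sym, of x "B *v x"] by (simp add: C_def matrix_vector_mul_assoc[symmetric])
  have negC: "(- C) *v x = - (C *v x)" for x by (simp add: matrix_vector_mult_def vec_eq_iff sum_negf)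
  obtain l where l: "l \<in> eigenvalues (- C)" "\<And>x. l * (x \<bullet> x) \<le> x \<bullet> (- C *v x)"
    using rayleigh_min_eigenvalue[OF symC] by blast
  define M where "M = - l"
  have bd: "(B *v x) \<bullet> (B *v x) \<le> M * (x \<bullet> x)" for x
    using l(2)[of x] quad[of x] by (simp add: negC M_def)
  obtain x0 where x0: "x0 \<noteq> 0" "(- C) *v x0 = l *\<^sub>R x0" using l(1) unfolding eigenvalues_def by blast
  have Cx0: "C *v x0 = M *\<^sub>R x0" using x0(2) negC[of x0] by (metis M_def minus_minus scaleR_minus_left)
  have "M * (x0 \<bullet> x0) = (B *v x0) \<bullet> (B *v x0)" using quad[of x0] Cx0 by simp
  then have "0 \<le> M * (x0 \<bullet> x0)" by simp
  moreover have "x0 \<bullet> x0 > 0" using x0 by simp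
  ultimately have M0: "M \<ge> 0" using mult_neg_pos[of M "x0 \<bullet> x0"] by linarith
  define s where "s = sqrt M"
  have s0: "s \<ge> 0" and s2: "s^2 = M" using M0 by (simp_all add: s_def)
  have BB: "B *v (B *v x0) = s^2 *\<^sub>R x0" using Cx0 s2 by (simp add: C_def matrix_vector_mul_assoc)
  have "\<exists>l'\<in>eigenvalues B. \<bar>l'\<bar> = s"
  proof (cases "B *v x0 + s *\<^sub>R x0 = 0")
    case True
    then have "B *v x0 = (- s) *\<^sub>R x0" by (simp add: eq_neg_iff_add_eq_0)
    then have "- s \<in> eigenvalues B" using x0 unfolding eigenvalues_def by blast
    then show ?thesis using s0 by (intro bexI[of _ "- s"]) auto
  next
    case False
    have "B *v (B *v x0 + s *\<^sub>R x0) = s *\<^sub>R (B *v x0 + s *\<^sub>R x0)"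
      using BB by (simp add: matrix_vector_right_distrib matrix_vector_mult_scaleR
          power2_eq_square scaleR_add_right add.commute)
    then have "s \<in> eigenvalues B" using False unfolding eigenvalues_def by blast
    then show ?thesis using s0 by (intro bexI[of _ s]) auto
  qed
  then obtain l' where l': "l' \<in> eigenvalues B" "\<bar>l'\<bar> = s" by blast
  have "norm (B *v x) \<le> \<bar>l'\<bar> * norm x" for x
  proof (rule power2_le_imp_le)
    show "(norm (B *v x))^2 \<le> (\<bar>l'\<bar> * norm x)^2"
      using bd[of x] s2 l'(2) by (simp add: power2_norm_eq_inner power_mult_distrib)
  qed (use s0 l'(2) in simp)
  then show ?thesis using l'(1) by blast
qed

lemma sigma_min_lower_bound:
  fixes Phi :: "real^'d^'s"
  assumes inj: "\<And>x. Phi *v x = 0 \<Longrightarrow> x = 0"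
  shows "sigma_min Phi > 0" and "sigma_min Phi * norm x \<le> norm (Phi *v x)"
proof -
  define A where "A = transpose Phi ** Phi"
  have sym: "transpose A = A" by (simp add: A_def matrix_transpose_mul)
  have quad: "x \<bullet> (A *v x) = (Phi *v x) \<bullet> (Phi *v x)" for x
    using inner_transpose_right[of x Phi "Phi *v x"] by (simp add: A_def matrix_vector_mul_assoc[symmetric])
  define E where "E = eigenvalues A"
  have fin: "finite E" using finite_eigenvalues_symmetric[OF sym] E_def by simp
  obtain l0 where l0: "l0 \<in> E" "\<And>x. l0 * (x \<bullet> x) \<le> x \<bullet> (A *v x)"
    using rayleigh_min_eigenvalue[OF sym] unfolding E_def by blast
  have pos: "l > 0" if "l \<in> E" for l
  proof (rule ccontr)
    assume "\<not> l > 0"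
    have "\<exists>v. v \<noteq> 0 \<and> A *v v = l *\<^sub>R v" using that unfolding E_def eigenvalues_def by simp
    then obtain v where v: "v \<noteq> 0" "A *v v = l *\<^sub>R v" by blast
    have "Phi *v v \<noteq> 0" using inj v(1) by blast
    then have "0 < (Phi *v v) \<bullet> (Phi *v v)" by simp
    also have "\<dots> = v \<bullet> (A *v v)" by (rule quad[symmetric])
    also have "\<dots> = l * (v \<bullet> v)" by (simp add: v(2))
    also have "\<dots> \<le> 0" using \<open>\<not> l > 0\<close> by (intro mult_nonpos_nonneg) auto
    finally show False by simp
  qed
  have "E \<noteq> {}" using l0(1) by blast
  then have minE: "Min E \<in> E" "Min E \<le> l0" using fin l0(1) by auto
  have sm: "sigma_min Phi = sqrt (Min E)" by (simp add: sigma_min_def E_def A_def)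
  have mpos: "Min E > 0" using pos minE(1) .
  then show "sigma_min Phi > 0" using sm by simp
  have "(sigma_min Phi * norm x)^2 = Min E * (x \<bullet> x)" using sm mpos
    by (simp add: power_mult_distrib power2_norm_eq_inner)
  also have "\<dots> \<le> l0 * (x \<bullet> x)" using minE by (simp add: mult_right_mono)
  also have "\<dots> \<le> (norm (Phi *v x))^2" using l0(2)[of x] quad[of x] by (simp add: power2_norm_eq_inner)
  finally show "sigma_min Phi * norm x \<le> norm (Phi *v x)" by (rule power2_le_imp_le) simp
qed

section \<open>Discounted Markov decision processes\<close>

locale mdp =
  fixes r :: "'s::finite \<Rightarrow> 'a::finite \<Rightarrow> real" and P :: "'s \<Rightarrow> 'a \<Rightarrow> 's \<Rightarrow> real" and alpha :: real
  assumes P_nonneg: "\<And>s a j. P s a j \<ge> 0"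
    and P_sum: "\<And>s a. (\<Sum>j\<in>UNIV. P s a j) = 1"
    and r_range: "\<And>s a. 0 \<le> r s a \<and> r s a \<le> 1"
    and alpha: "0 < alpha" "alpha < 1"
begin

lemma expectation_diff_le:
  "\<bar>(\<Sum>j\<in>UNIV. P s a j * x $ j) - (\<Sum>j\<in>UNIV. P s a j * y $ j)\<bar> \<le> sup_norm (x - y)"
proof -
  have "\<bar>(\<Sum>j\<in>UNIV. P s a j * x $ j) - (\<Sum>j\<in>UNIV. P s a j * y $ j)\<bar>
      = \<bar>\<Sum>j\<in>UNIV. P s a j * (x - y) $ j\<bar>" by (simp add: sum_subtractf right_diff_distrib)
  also have "\<dots> \<le> (\<Sum>j\<in>UNIV. P s a j * sup_norm (x - y))"
    by (rule order_trans[OF sum_abs sum_mono])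
      (metis abs_mult abs_of_nonneg P_nonneg mult_left_mono sup_norm_component_le)
  also have "\<dots> = sup_norm (x - y)" by (simp add: sum_distrib_right[symmetric] P_sum)
  finally show ?thesis .
qed

lemma Tmu_contraction: "sup_norm (Tmu r P alpha mu x - Tmu r P alpha mu y) \<le> alpha * sup_norm (x - y)"
proof (rule sup_norm_leI)
  fix s
  have "\<bar>(Tmu r P alpha mu x - Tmu r P alpha mu y) $ s\<bar> =
     alpha * \<bar>(\<Sum>j\<in>UNIV. P s (mu s) j * x $ j) - (\<Sum>j\<in>UNIV. P s (mu s) j * y $ j)\<bar>"
    using alpha by (simp add: Tmu_def right_diff_distrib[symmetric] abs_mult)
  also have "\<dots> \<le> alpha * sup_norm (x - y)" using alpha expectation_diff_le by (simp add: mult_left_mono)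
  finally show "\<bar>(Tmu r P alpha mu x - Tmu r P alpha mu y) $ s\<bar> \<le> alpha * sup_norm (x - y)" .
qed

lemma abs_Max_range_diff_le:
  fixes f g :: "'b::finite \<Rightarrow> real"
  assumes "\<And>a. \<bar>f a - g a\<bar> \<le> e"
  shows "\<bar>Max (range f) - Max (range g)\<bar> \<le> e"
proof -
  have shift: "Max (range u) \<le> Max (range v) + e" if "\<And>a. u a \<le> v a + e" for u v :: "'b \<Rightarrow> real"
  proof -
    have "\<And>a. v a \<le> Max (range v)" by (rule Max_ge) auto
    then show ?thesis by (subst Max_le_iff) (auto intro: order_trans[OF that] add_right_mono)
  qed
  have fg: "f a \<le> g a + e" and gf: "g a \<le> f a + e" for a using assms[of a] by linarith+
  have "Max (range f) \<le> Max (range g) + e" by (rule shift, rule fg)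
  moreover have "Max (range g) \<le> Max (range f) + e" by (rule shift, rule gf)
  ultimately show ?thesis by linarith
qed

lemma Tbell_contraction: "sup_norm (Tbell r P alpha x - Tbell r P alpha y) \<le> alpha * sup_norm (x - y)"
proof (rule sup_norm_leI)
  fix s
  let ?f = "\<lambda>x a. r s a + alpha * (\<Sum>j\<in>UNIV. P s a j * x $ j)"
  have "\<bar>?f x a - ?f y a\<bar> \<le> alpha * sup_norm (x - y)" for a
    using alpha expectation_diff_le[of s a x y]
    by (simp add: right_diff_distrib[symmetric] abs_mult mult_left_mono)
  then have "\<bar>Max (range (?f x)) - Max (range (?f y))\<bar> \<le> alpha * sup_norm (x - y)"
    by (rule abs_Max_range_diff_le)
  then show "\<bar>(Tbell r P alpha x - Tbell r P alpha y) $ s\<bar> \<le> alpha * sup_norm (x - y)"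
    by (simp add: Tbell_def)
qed

definition in_value_box :: "real^'s \<Rightarrow> bool" where
  "in_value_box x \<longleftrightarrow> (\<forall>i. 0 \<le> x $ i \<and> x $ i \<le> 1 / (1 - alpha))"

lemma sup_norm_diff_value_box:
  "in_value_box x \<Longrightarrow> in_value_box y \<Longrightarrow> sup_norm (x - y) \<le> 1 / (1 - alpha)"
  unfolding in_value_box_def by (intro sup_norm_leI) (simp add: abs_le_iff, smt (verit))

lemma bellman_term_value_box:
  assumes "in_value_box x"
  shows "0 \<le> r s a + alpha * (\<Sum>j\<in>UNIV. P s a j * x $ j)
    \<and> r s a + alpha * (\<Sum>j\<in>UNIV. P s a j * x $ j) \<le> 1 / (1 - alpha)"
proof -
  have "\<And>j. 0 \<le> P s a j * x $ j" "\<And>j. P s a j * x $ j \<le> P s a j * (1 / (1 - alpha))"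
    using assms unfolding in_value_box_def by (simp add: P_nonneg, meson P_nonneg mult_left_mono)
  then have E: "0 \<le> (\<Sum>j\<in>UNIV. P s a j * x $ j)" "(\<Sum>j\<in>UNIV. P s a j * x $ j) \<le> 1 / (1 - alpha)"
    by (metis (no_types, lifting) P_sum sum_distrib_right sum_mono sum_nonneg mult_1)+
  have "alpha * (\<Sum>j\<in>UNIV. P s a j * x $ j) \<le> alpha * (1 / (1 - alpha))"
    using mult_left_mono[OF E(2), of alpha] alpha by simp
  moreover have "1 + alpha * (1 / (1 - alpha)) = 1 / (1 - alpha)" using alpha by (simp add: field_simps)
  ultimately show ?thesis using r_range[of s a] E alpha by (smt (verit) mult_nonneg_nonneg)
qed

lemma Tbell_value_box: "in_value_box x \<Longrightarrow> in_value_box (Tbell r P alpha x)"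
proof -
  assume box: "in_value_box x"
  let ?f = "\<lambda>s a. r s a + alpha * (\<Sum>j\<in>UNIV. P s a j * x $ j)"
  have "0 \<le> Max (range (?f s))" for s
  proof -
    obtain a :: 'a where True by simp
    have "0 \<le> ?f s a" using bellman_term_value_box[OF box] by blast
    also have "?f s a \<le> Max (range (?f s))" by (rule Max_ge) auto
    finally show ?thesis .
  qed
  moreover have "Max (range (?f s)) \<le> 1 / (1 - alpha)" for s
    using bellman_term_value_box[OF box] by (subst Max_le_iff) auto
  ultimately show ?thesis unfolding in_value_box_def Tbell_def by simp
qed

lemma exp_reward_Suc:
  "exp_reward r P mu (Suc t) s = (\<Sum>j\<in>UNIV. P s (mu s) j * exp_reward r P mu t j)"
  by (simp add: exp_reward_def)

lemma exp_reward_0: "exp_reward r P mu 0 s = r s (mu s)"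
  by (simp add: exp_reward_def)

lemma exp_reward_bounds: "0 \<le> exp_reward r P mu t s \<and> exp_reward r P mu t s \<le> 1"
proof (induction t arbitrary: s)
  case 0 then show ?case using r_range[of s "mu s"] by (simp only: exp_reward_0)
next
  case (Suc t)
  have "0 \<le> (\<Sum>j\<in>UNIV. P s (mu s) j * exp_reward r P mu t j)"
    using Suc.IH P_nonneg by (intro sum_nonneg mult_nonneg_nonneg) auto
  moreover have "(\<Sum>j\<in>UNIV. P s (mu s) j * exp_reward r P mu t j) \<le> (\<Sum>j\<in>UNIV. P s (mu s) j)"
    using Suc.IH P_nonneg by (intro sum_mono mult_left_le) auto
  ultimately show ?case unfolding exp_reward_Suc P_sum by simp
qed

lemma summable_discounted_reward: "summable (\<lambda>t. alpha ^ t * exp_reward r P mu t s)"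
proof (rule summable_comparison_test[OF _ summable_geometric[of alpha]])
  have "norm (alpha ^ n * exp_reward r P mu n s) \<le> alpha ^ n" for n
    using exp_reward_bounds[of mu n s] alpha by (simp add: abs_mult mult_left_le)
  then show "\<exists>N. \<forall>n\<ge>N. norm (alpha ^ n * exp_reward r P mu n s) \<le> alpha ^ n" by blast
qed (use alpha in simp)

lemma Jpol_value_box: "in_value_box (Jpol r P alpha mu)"
  unfolding in_value_box_def Jpol_def
proof (intro allI conjI)
  fix s
  show "0 \<le> (\<chi> s. \<Sum>t. alpha ^ t * exp_reward r P mu t s) $ s"
    unfolding vec_lambda_beta
    by (rule suminf_nonneg[OF summable_discounted_reward]) (use exp_reward_bounds alpha in simp)
  have "(\<Sum>t. alpha ^ t * exp_reward r P mu t s) \<le> (\<Sum>t. alpha ^ t)"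
  proof (rule suminf_le[OF _ summable_discounted_reward summable_geometric])
    show "alpha ^ n * exp_reward r P mu n s \<le> alpha ^ n" for n
      using exp_reward_bounds[of mu n s] alpha by (simp add: mult_left_le)
  qed (use alpha in simp)
  also have "\<dots> = 1 / (1 - alpha)" using alpha suminf_geometric[of alpha] by simp
  finally show "(\<chi> s. \<Sum>t. alpha ^ t * exp_reward r P mu t s) $ s \<le> 1 / (1 - alpha)"
    unfolding vec_lambda_beta .
qed

lemma Jpol_fixpoint: "Tmu r P alpha mu (Jpol r P alpha mu) = Jpol r P alpha mu"
proof -
  have bellman: "(\<Sum>t. alpha ^ t * exp_reward r P mu t s)
      = r s (mu s) + alpha * (\<Sum>j\<in>UNIV. P s (mu s) j * (\<Sum>t. alpha ^ t * exp_reward r P mu t j))" for s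
  proof -
    have "(\<Sum>t. alpha ^ t * exp_reward r P mu t s)
        = (\<Sum>t. alpha ^ Suc t * exp_reward r P mu (Suc t) s) + r s (mu s)"
      using suminf_split_head[OF summable_discounted_reward[of mu s]] by (simp add: exp_reward_0)
    also have "(\<Sum>t. alpha ^ Suc t * exp_reward r P mu (Suc t) s)
        = (\<Sum>t. alpha * (\<Sum>j\<in>UNIV. P s (mu s) j * (alpha ^ t * exp_reward r P mu t j)))"
      by (simp add: exp_reward_Suc sum_distrib_left mult_ac)
    also have "\<dots> = alpha * (\<Sum>t. (\<Sum>j\<in>UNIV. P s (mu s) j * (alpha ^ t * exp_reward r P mu t j)))"
      by (rule suminf_mult) (intro summable_sum summable_mult summable_discounted_reward)
    also have "(\<Sum>t. (\<Sum>j\<in>UNIV. P s (mu s) j * (alpha ^ t * exp_reward r P mu t j)))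
        = (\<Sum>j\<in>UNIV. (\<Sum>t. P s (mu s) j * (alpha ^ t * exp_reward r P mu t j)))"
      by (rule suminf_sum) (intro summable_mult summable_discounted_reward)
    also have "\<dots> = (\<Sum>j\<in>UNIV. P s (mu s) j * (\<Sum>t. alpha ^ t * exp_reward r P mu t j))"
      by (intro sum.cong refl suminf_mult summable_discounted_reward)
    finally show ?thesis by simp
  qed
  show ?thesis unfolding Tmu_def Jpol_def
    by (simp only: vec_eq_iff vec_lambda_beta) (intro allI, rule bellman[symmetric])
qed

lemma regression_target_error:
  "sup_norm ((Tmu r P alpha mu' ^^ m) ((Tbell r P alpha ^^ h) J) + w - Jpol r P alpha mu')
     \<le> alpha ^ m * (alpha ^ h * sup_norm (J - Jpol r P alpha mu) + 1 / (1 - alpha)) + sup_norm w"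
proof -
  let ?T = "Tbell r P alpha" and ?Tp = "Tmu r P alpha mu'"
  let ?X = "(?T ^^ h) J" and ?Jk = "Jpol r P alpha mu'" and ?Jn = "Jpol r P alpha mu"
  have "sup_norm (?X - (?T ^^ h) ?Jn) \<le> alpha ^ h * sup_norm (J - ?Jn)"
    using alpha by (intro funpow_contraction Tbell_contraction) simp
  moreover have "in_value_box ((?T ^^ h) ?Jn)"
    by (induction h) (simp_all add: Jpol_value_box Tbell_value_box)
  then have "sup_norm ((?T ^^ h) ?Jn - ?Jk) \<le> 1 / (1 - alpha)"
    by (intro sup_norm_diff_value_box Jpol_value_box)
  ultimately have X: "sup_norm (?X - ?Jk) \<le> alpha ^ h * sup_norm (J - ?Jn) + 1 / (1 - alpha)"
    using sup_norm_diff_triangle[of ?X ?Jk "(?T ^^ h) ?Jn"] by linarith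
  have "sup_norm ((?Tp ^^ m) ?X - (?Tp ^^ m) ?Jk) \<le> alpha ^ m * sup_norm (?X - ?Jk)"
    using alpha by (intro funpow_contraction Tmu_contraction) simp
  moreover have "(?Tp ^^ m) ?Jk = ?Jk" by (induction m) (simp_all add: Jpol_fixpoint)
  ultimately have "sup_norm ((?Tp ^^ m) ?X - ?Jk) \<le> alpha ^ m * sup_norm (?X - ?Jk)" by simp
  also have "\<dots> \<le> alpha ^ m * (alpha ^ h * sup_norm (J - ?Jn) + 1 / (1 - alpha))"
    using X alpha by (intro mult_left_mono) auto
  finally show ?thesis
    using sup_norm_add_le[of "(?Tp ^^ m) ?X - ?Jk" w] by (simp add: algebra_simps)
qed

end

section \<open>Least squares and gradient descent\<close>

lemma sel_diag_mult_vector: "sel_diag D *v y = (\<chi> i. if i \<in> D then y$i else 0)"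
proof -
  have "(\<Sum>j\<in>UNIV. (if i = j \<and> i \<in> D then 1 else 0) * y$j) = (if i \<in> D then y$i else 0)" for i
    by (cases "i \<in> D") (simp_all add: if_distrib[of "\<lambda>x. x * _"] cong: if_cong)
  then show ?thesis by (simp add: sel_diag_def matrix_vector_mult_def vec_eq_iff)
qed

lemma transpose_sel_diag: "transpose (sel_diag D) = sel_diag D"
  by (auto simp: transpose_def sel_diag_def vec_eq_iff)

lemma transpose_gram: "transpose (gram Phi D) = gram Phi D"
  by (simp add: gram_def matrix_transpose_mul matrix_mul_assoc transpose_sel_diag)

lemma inner_gram:
  "x \<bullet> (gram Phi D *v x) = (sel_diag D *v (Phi *v x)) \<bullet> (sel_diag D *v (Phi *v x))"
proof -
  have "gram Phi D *v x = transpose Phi *v (sel_diag D *v (Phi *v x))"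
    by (simp add: gram_def matrix_vector_mul_assoc matrix_mul_assoc)
  then have "x \<bullet> (gram Phi D *v x) = (Phi *v x) \<bullet> (sel_diag D *v (Phi *v x))"
    by (simp only: inner_transpose_right)
  also have "\<dots> = (sel_diag D *v (Phi *v x)) \<bullet> (sel_diag D *v (Phi *v x))"
    by (simp add: sel_diag_mult_vector inner_vec_def if_distrib[of "\<lambda>x. _ * x"] cong: if_cong)
  finally show ?thesis .
qed

lemma full_rank_sel_diag_mult_inj:
  assumes "rank (sel_diag D ** (Phi::real^'d^'s)) = CARD('d)" and "(sel_diag D ** Phi) *v x = 0"
  shows "x = 0"
  using assms unfolding full_rank_injective by (metis inj_eq matrix_vector_mult_0_right)

lemma full_rank_sel_diag_imp_inj:
  assumes "rank (sel_diag D ** (Phi::real^'d^'s)) = CARD('d)" and "Phi *v x = 0"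
  shows "x = 0"
  using full_rank_sel_diag_mult_inj[OF assms(1)] assms(2)
  by (simp add: matrix_vector_mul_assoc[symmetric])

lemma gram_right_inverse:
  assumes rank: "rank (sel_diag D ** (Phi::real^'d^'s)) = CARD('d)"
  shows "gram Phi D ** matrix_inv (gram Phi D) = mat 1"
proof -
  have "x = 0" if "gram Phi D *v x = 0" for x
  proof -
    have "(sel_diag D *v (Phi *v x)) \<bullet> (sel_diag D *v (Phi *v x)) = 0"
      using that inner_gram[of x Phi D] by simp
    then show "x = 0"
      by (intro full_rank_sel_diag_mult_inj[OF rank]) (simp add: matrix_vector_mul_assoc)
  qed
  then have "invertible (gram Phi D)"
    unfolding invertible_left_inverse matrix_left_invertible_ker by blast
  then show ?thesis unfolding matrix_inv_def invertible_def by (rule someI_ex[THEN conjunct1])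
qed

definition lsq :: "real^'d^'s \<Rightarrow> 's set \<Rightarrow> real^'s \<Rightarrow> real^'d" where
  "lsq Phi D J = matrix_inv (gram Phi D) *v (transpose Phi *v (sel_diag D *v J))"

lemma gram_lsq:
  "rank (sel_diag D ** Phi) = CARD('d) \<Longrightarrow>
    gram Phi D *v lsq Phi D J = transpose (Phi::real^'d^'s) *v (sel_diag D *v J)"
  unfolding lsq_def
  by (simp only: matrix_vector_mul_assoc[of "gram Phi D"] gram_right_inverse matrix_vector_mul_lid)

lemma Mproj_eq_lsq: "Mproj Phi D *v J = Phi *v lsq Phi D J"
  unfolding Mproj_def lsq_def by (simp add: matrix_vector_mul_assoc matrix_mul_assoc)

lemma gd_iter_error:
  assumes normal: "gram Phi D *v ths = transpose Phi *v (sel_diag D *v Jh)"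
    and step: "\<And>v. norm (v - gamma *\<^sub>R (gram Phi D *v v)) \<le> q * norm v" and "0 \<le> q"
  shows "norm (gd_iter Phi D gamma eta Jh th - ths) \<le> q ^ eta * norm (th - ths)"
proof -
  define F where "F = (\<lambda>th. th - gamma *\<^sub>R (gram Phi D *v th - transpose Phi *v (sel_diag D *v Jh)))"
  have F: "F x - ths = (x - ths) - gamma *\<^sub>R (gram Phi D *v (x - ths))" for x
    unfolding F_def normal[symmetric] by (simp add: matrix_vector_mult_diff_distrib algebra_simps)
  have "norm ((F ^^ eta) th - ths) \<le> q ^ eta * norm (th - ths)"
  proof (induction eta)
    case (Suc k)
    have "norm ((F ^^ Suc k) th - ths) \<le> q * norm ((F ^^ k) th - ths)" using step by (simp add: F)
    also have "\<dots> \<le> q * (q ^ k * norm (th - ths))" by (rule mult_left_mono[OF Suc.IH \<open>0 \<le> q\<close>])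
    finally show ?case by simp
  qed simp
  then show ?thesis by (simp add: gd_iter_def F_def)
qed

lemma gd_step_norm_le:
  fixes G :: "real^'d^'d"
  assumes sym: "transpose G = G" and "gamma > 0"
  shows "\<exists>l\<in>eigenvalues G. \<forall>v. norm (v - gamma *\<^sub>R (G *v v)) \<le> \<bar>1 - gamma * l\<bar> * norm v"
proof -
  define B where "B = mat 1 - gamma *\<^sub>R G"
  have Bx: "B *v x = x - gamma *\<^sub>R (G *v x)" for x
    by (simp add: B_def matrix_vector_mult_diff_rdistrib scaleR_matrix_vector_assoc[symmetric])
  have "transpose B = B" using sym by (simp add: B_def transpose_minus transpose_scalar)
  then obtain l where l: "l \<in> eigenvalues B" "\<And>x. norm (B *v x) \<le> \<bar>l\<bar> * norm x"
    using symmetric_norm_le_eigenvalue by blast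
  obtain v where v: "v \<noteq> 0" "B *v v = l *\<^sub>R v" using l(1) unfolding eigenvalues_def by blast
  have "gamma *\<^sub>R (G *v v) = (1 - l) *\<^sub>R v" using v(2) unfolding Bx by (simp add: algebra_simps)
  then have "G *v v = ((1 - l) / gamma) *\<^sub>R v" using \<open>gamma > 0\<close>
    by (metis divide_inverse_commute scaleR_scaleR inverse_eq_divide scaleR_one
        left_inverse less_irrefl mult.commute)
  then have "(1 - l) / gamma \<in> eigenvalues G" using v(1) unfolding eigenvalues_def by blast
  moreover have "\<bar>1 - gamma * ((1 - l) / gamma)\<bar> = \<bar>l\<bar>" using \<open>gamma > 0\<close> by simp
  ultimately show ?thesis using l(2) unfolding Bx by metis
qed

lemma gd_iter_sup_norm_error:
  fixes Phi :: "real^'d^'s"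
  assumes rank: "rank (sel_diag D ** Phi) = CARD('d)" and "gamma > 0"
    and eig: "\<And>l. l \<in> eigenvalues (gram Phi D) \<Longrightarrow> \<bar>1 - gamma * l\<bar> \<le> q"
  shows "0 \<le> q"
    and "sup_norm (Phi *v gd_iter Phi D gamma eta Jh th - Mproj Phi D *v Jh)
      \<le> sqrt (real CARD('s)) * mat_sup_norm Phi / sigma_min Phi * q ^ eta
        * sup_norm (Phi *v th - Mproj Phi D *v Jh)"
proof -
  obtain l where "l \<in> eigenvalues (gram Phi D)"
    and step: "\<And>v. norm (v - gamma *\<^sub>R (gram Phi D *v v)) \<le> \<bar>1 - gamma * l\<bar> * norm v"
    using gd_step_norm_le[OF transpose_gram \<open>gamma > 0\<close>] by blast
  with eig have lq: "\<bar>1 - gamma * l\<bar> \<le> q" by blast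
  then show q0: "0 \<le> q" by linarith
  note sigma = sigma_min_lower_bound[of Phi, OF full_rank_sel_diag_imp_inj[OF rank]]
  let ?ths = "lsq Phi D Jh" and ?th' = "gd_iter Phi D gamma eta Jh th"
  have "norm (?th' - ?ths) \<le> q ^ eta * norm (th - ?ths)"
  proof (rule gd_iter_error[OF gram_lsq[OF rank] _ q0])
    show "norm (v - gamma *\<^sub>R (gram Phi D *v v)) \<le> q * norm v" for v
      using step[of v] lq by (meson mult_right_mono norm_ge_zero order_trans)
  qed
  also have "sigma_min Phi * norm (th - ?ths) \<le> sqrt (real CARD('s)) * sup_norm (Phi *v th - Phi *v ?ths)"
    using sigma(2)[of "th - ?ths"] norm_le_sqrt_card_sup_norm[of "Phi *v (th - ?ths)"]
    by (simp add: matrix_vector_mult_diff_distrib)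
  then have "norm (th - ?ths) \<le> sqrt (real CARD('s)) * sup_norm (Phi *v th - Phi *v ?ths) / sigma_min Phi"
    using sigma(1) by (simp add: field_simps)
  finally have "mat_sup_norm Phi * norm (?th' - ?ths) \<le> mat_sup_norm Phi * (q ^ eta
      * (sqrt (real CARD('s)) * sup_norm (Phi *v th - Phi *v ?ths) / sigma_min Phi))"
    using q0 by (intro mult_left_mono mat_sup_norm_nonneg) (simp_all add: mult_left_mono)
  moreover have "sup_norm (Phi *v ?th' - Phi *v ?ths) \<le> mat_sup_norm Phi * norm (?th' - ?ths)"
    using sup_norm_matrix_vector_mult_le[of Phi "?th' - ?ths"] sup_norm_le_norm[of "?th' - ?ths"]
      mat_sup_norm_nonneg[of Phi]
    by (simp add: matrix_vector_mult_diff_distrib) (meson mult_left_mono order_trans)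
  ultimately show "sup_norm (Phi *v ?th' - Mproj Phi D *v Jh)
      \<le> sqrt (real CARD('s)) * mat_sup_norm Phi / sigma_min Phi * q ^ eta
        * sup_norm (Phi *v th - Mproj Phi D *v Jh)"
    unfolding Mproj_eq_lsq by (simp add: field_simps)
qed

section \<open>One step of approximate policy iteration\<close>

lemma cSUP_cSUP_upper_finite_type:
  fixes F :: "'b::finite \<Rightarrow> 'i \<Rightarrow> real"
  assumes "x \<in> A" and "i \<in> I (g x)" and fin: "\<And>b. finite (I b)"
  shows "F (g x) i \<le> (SUP k\<in>A. SUP j\<in>I (g k). F (g k) j)"
proof -
  let ?S = "\<lambda>b. SUP j\<in>I b. F b j"
  have "F (g x) i \<le> ?S (g x)" using assms(2) fin by (intro cSUP_upper bdd_above_finite) auto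
  also have "?S (g x) \<le> (SUP k\<in>A. ?S (g k))"
  proof (rule cSUP_upper[OF assms(1)])
    have "(\<lambda>k. ?S (g k)) ` A \<subseteq> range ?S" by blast
    then show "bdd_above ((\<lambda>k. ?S (g k)) ` A)" by (rule bdd_above_finite[OF finite_subset]) simp
  qed
  finally show ?thesis .
qed

lemma api_error_combine:
  fixes A R e d dA cg q p a eps :: real
  assumes A: "A \<le> d * (q * (p * e + 1 / (1 - a)) + eps) + dA"
    and R: "R \<le> A + cg * (e + 1 / (1 - a) + A)"
    and "0 \<le> cg" "0 \<le> d" "0 \<le> e" "0 \<le> q" "0 \<le> p" "a < 1"
  shows "R \<le> (q * p * d + cg * (q * p * d + 1)) * e
              + ((1 + cg) * ((q + q * p) / (1 - a) * d + dA + d * eps) + cg / (1 - a))"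
proof -
  define A' where "A' = q * p * d * e + (q + q * p) / (1 - a) * d + dA + d * eps"
  have "q * p / (1 - a) * d \<ge> 0" using assms by simp
  then have "A \<le> A'" using A unfolding A'_def by (simp add: algebra_simps add_divide_distrib)
  have "R \<le> (1 + cg) * A + cg * e + cg / (1 - a)" using R by (simp add: algebra_simps)
  also have "\<dots> \<le> (1 + cg) * A' + cg * e + cg / (1 - a)"
    using \<open>A \<le> A'\<close> \<open>0 \<le> cg\<close> by (simp add: mult_left_mono)
  also have "\<dots> = (q * p * d + cg * (q * p * d + 1)) * e
              + ((1 + cg) * ((q + q * p) / (1 - a) * d + dA + d * eps) + cg / (1 - a))"
    unfolding A'_def by (simp add: algebra_simps)
  finally show ?thesis .
qed

context mdp
begin

lemma api_step_error:
  fixes Phi :: "real^'d::finite^'s" and theta :: "real^'d"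
  defines "c \<equiv> sqrt (real CARD('s)) * mat_sup_norm Phi / sigma_min Phi"
  assumes rank: "rank (sel_diag D ** Phi) = CARD('d)" and "gamma > 0"
    and FV: "mat_sup_norm (Mproj Phi D) \<le> dFV"
    and app: "sup_norm (Mproj Phi D *v Jpol r P alpha mu' - Jpol r P alpha mu') \<le> dApp"
    and GD: "\<And>l. l \<in> eigenvalues (gram Phi D) \<Longrightarrow> \<bar>1 - gamma * l\<bar> \<le> aGD"
    and w: "sup_norm w \<le> eps"
  shows "sup_norm (Jpol r P alpha mu' - Phi *v gd_iter Phi D gamma eta
            ((Tmu r P alpha mu' ^^ m) ((Tbell r P alpha ^^ h) (Phi *v theta)) + w) theta)
     \<le> (alpha ^ m * alpha ^ h * dFV + c * aGD ^ eta * (alpha ^ m * alpha ^ h * dFV + 1))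
          * sup_norm (Phi *v theta - Jpol r P alpha mu)
       + ((1 + c * aGD ^ eta) * ((alpha ^ m + alpha ^ m * alpha ^ h) / (1 - alpha) * dFV + dApp + dFV * eps)
          + c * aGD ^ eta / (1 - alpha))"
proof -
  define Jh where "Jh = (Tmu r P alpha mu' ^^ m) ((Tbell r P alpha ^^ h) (Phi *v theta)) + w"
  let ?Jk = "Jpol r P alpha mu'" and ?Jn = "Jpol r P alpha mu" and ?Mp = "Mproj Phi D"
  let ?e = "sup_norm (Phi *v theta - ?Jn)" and ?th' = "gd_iter Phi D gamma eta Jh theta"
  have dFV: "0 \<le> dFV" using FV mat_sup_norm_nonneg order_trans by blast
  have aGD: "0 \<le> aGD" using gd_iter_sup_norm_error(1)[OF rank \<open>gamma > 0\<close> GD] .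
  have "0 \<le> c"
    using sigma_min_lower_bound(1)[of Phi, OF full_rank_sel_diag_imp_inj[OF rank]]
      mat_sup_norm_nonneg[of Phi]
    by (simp add: c_def)
  then have cg: "0 \<le> c * aGD ^ eta" using aGD by simp
  have "sup_norm (Jh - ?Jk) \<le> alpha ^ m * (alpha ^ h * ?e + 1 / (1 - alpha)) + eps"
    using regression_target_error[where mu'=mu' and m=m and h=h and J="Phi *v theta" and w=w and mu=mu]
      w unfolding Jh_def by linarith
  then have "mat_sup_norm ?Mp * sup_norm (Jh - ?Jk)
      \<le> dFV * (alpha ^ m * (alpha ^ h * ?e + 1 / (1 - alpha)) + eps)"
    by (rule mult_mono[OF FV _ dFV sup_norm_nonneg])
  then have proj: "sup_norm (?Mp *v Jh - ?Jk)
      \<le> dFV * (alpha ^ m * (alpha ^ h * ?e + 1 / (1 - alpha)) + eps) + dApp"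
    using sup_norm_matrix_vector_mult_diff_le[of ?Mp Jh ?Jk] app by linarith
  have "sup_norm (Phi *v theta - ?Mp *v Jh) \<le> ?e + 1 / (1 - alpha) + sup_norm (?Mp *v Jh - ?Jk)"
    using sup_norm_diff_triangle[of "Phi *v theta" "?Mp *v Jh" ?Jn]
      sup_norm_diff_triangle[of ?Jn "?Mp *v Jh" ?Jk] sup_norm_minus_commute[of ?Jk "?Mp *v Jh"]
      sup_norm_diff_value_box[OF Jpol_value_box Jpol_value_box, of mu mu'] by linarith
  then have "c * aGD ^ eta * sup_norm (Phi *v theta - ?Mp *v Jh)
      \<le> c * aGD ^ eta * (?e + 1 / (1 - alpha) + sup_norm (?Mp *v Jh - ?Jk))"
    by (rule mult_left_mono[OF _ cg])
  moreover have "sup_norm (Phi *v ?th' - ?Mp *v Jh) \<le> c * aGD ^ eta * sup_norm (Phi *v theta - ?Mp *v Jh)"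
    using gd_iter_sup_norm_error(2)[OF rank \<open>gamma > 0\<close> GD, of eta Jh theta] unfolding c_def .
  ultimately have "sup_norm (?Jk - Phi *v ?th')
      \<le> sup_norm (?Mp *v Jh - ?Jk) + c * aGD ^ eta * (?e + 1 / (1 - alpha) + sup_norm (?Mp *v Jh - ?Jk))"
    using sup_norm_diff_triangle[of ?Jk "Phi *v ?th'" "?Mp *v Jh"] sup_norm_minus_commute[of ?Jk "?Mp *v Jh"]
      sup_norm_minus_commute[of "?Mp *v Jh" "Phi *v ?th'"] by linarith
  from api_error_combine[OF proj this cg dFV sup_norm_nonneg] show ?thesis
    using alpha by (simp add: Jh_def)
qed

end

theorem mainTheorem8:
  fixes r :: "'s::finite \<Rightarrow> 'a::finite \<Rightarrow> real"
    and P :: "'s \<Rightarrow> 'a \<Rightarrow> 's \<Rightarrow> real"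
    and alpha gamma epsLA epsPE :: real
    and m H eta :: nat
    and Phi :: "real^'d::finite^'s"
    and D :: "nat \<Rightarrow> 's set"
    and mu :: "nat \<Rightarrow> 's \<Rightarrow> 'a"
    and theta :: "nat \<Rightarrow> real^'d"
    and w :: "nat \<Rightarrow> real^'s"
  defines "T \<equiv> Tbell r P alpha"
    and "Tp \<equiv> Tmu r P alpha"
    and "Jv \<equiv> Jpol r P alpha"
    and "J \<equiv> (\<lambda>k. Phi *v theta k)"
    and "deltaFV \<equiv> (SUP k\<in>{1..}. mat_sup_norm (Mproj Phi (D (k - 1))))"
    and "deltaApp \<equiv> (SUP k\<in>{1..}. SUP mu'\<in>UNIV.
                       sup_norm (Mproj Phi (D (k - 1)) *v Jpol r P alpha mu' - Jpol r P alpha mu'))"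
    and "alphaGD \<equiv> (SUP k. SUP l\<in>eigenvalues (gram Phi (D k)). \<bar>1 - gamma * l\<bar>)"
    and "c \<equiv> sqrt (real CARD('s)) * mat_sup_norm Phi / sigma_min Phi"
  assumes P_nonneg: "\<And>s a j. P s a j \<ge> 0"
    and P_sum: "\<And>s a. (\<Sum>j\<in>UNIV. P s a j) = 1"
    and r_range: "\<And>s a. 0 \<le> r s a \<and> r s a \<le> 1"
    and alpha: "0 < alpha" "alpha < 1"
    and params: "m \<ge> 1" "H \<ge> 1" "eta \<ge> 1" "gamma > 0" "epsLA \<ge> 0" "epsPE \<ge> 0"
    and rankD: "\<And>k. rank (sel_diag (D k) ** Phi) = CARD('d)"
    and FV_finite: "bdd_above ((\<lambda>k. mat_sup_norm (Mproj Phi (D (k - 1)))) ` {1..})"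
    and lookahead: "\<And>k. sup_norm ((T ^^ H) (J k) - Tp (mu (Suc k)) ((T ^^ (H - 1)) (J k))) \<le> epsLA"
    and w_supp: "\<And>k i. i \<notin> D k \<Longrightarrow> w (Suc k) $ i = 0"
    and w_bound: "\<And>k. sup_norm (w (Suc k)) \<le> epsPE"
    and gd: "\<And>k. theta (Suc k) =
               gd_iter Phi (D k) gamma eta
                 ((Tp (mu (Suc k)) ^^ m) ((T ^^ (H - 1)) (J k)) + w (Suc k)) (theta k)"
  shows "\<forall>k\<ge>1. sup_norm (Jv (mu k) - J k)
           \<le> (alpha ^ (m + H - 1) * deltaFV + c * alphaGD ^ eta * (alpha ^ (m + H - 1) * deltaFV + 1))
               * sup_norm (J (k - 1) - Jv (mu (k - 1)))
             + ((1 + c * alphaGD ^ eta)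
                 * ((alpha ^ m + alpha ^ (m + H - 1)) / (1 - alpha) * deltaFV + deltaApp + deltaFV * epsPE)
                + c * alphaGD ^ eta / (1 - alpha))"
proof (intro allI impI)
  text \<open>The bound does not depend on how \<open>\<mu>\<^sub>k\<^sub>+\<^sub>1\<close> was chosen.\<close>
  interpret mdp r P alpha using P_nonneg P_sum r_range alpha by unfold_locales auto
  fix k :: nat assume "k \<ge> 1"
  then obtain n where k: "k = Suc n" by (cases k) auto
  have FV: "mat_sup_norm (Mproj Phi (D n)) \<le> deltaFV"
    unfolding deltaFV_def using cSUP_upper[OF _ FV_finite, of "Suc n"] by simp
  have app: "sup_norm (Mproj Phi (D n) *v Jpol r P alpha mu' - Jpol r P alpha mu') \<le> deltaApp" for mu'
    using cSUP_cSUP_upper_finite_type[where x="Suc n" and A="{1..}" and g="\<lambda>k. D (k - 1)"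
        and F="\<lambda>Dk mu'. sup_norm (Mproj Phi Dk *v Jpol r P alpha mu' - Jpol r P alpha mu')"
        and I="\<lambda>_. UNIV" and i=mu']
    unfolding deltaApp_def by simp
  have GD: "\<bar>1 - gamma * l\<bar> \<le> alphaGD" if "l \<in> eigenvalues (gram Phi (D n))" for l
    using cSUP_cSUP_upper_finite_type[where x=n and A=UNIV and g=D and F="\<lambda>_ l. \<bar>1 - gamma * l\<bar>"
        and I="\<lambda>Dk. eigenvalues (gram Phi Dk)", OF _ that finite_eigenvalues_symmetric[OF transpose_gram]]
    unfolding alphaGD_def by simp
  have pow: "alpha ^ (m + H - 1) = alpha ^ m * alpha ^ (H - 1)"
    using params(2) by (simp add: power_add[symmetric])
  show "sup_norm (Jv (mu k) - J k)
      \<le> (alpha ^ (m + H - 1) * deltaFV + c * alphaGD ^ eta * (alpha ^ (m + H - 1) * deltaFV + 1))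
          * sup_norm (J (k - 1) - Jv (mu (k - 1)))
        + ((1 + c * alphaGD ^ eta)
            * ((alpha ^ m + alpha ^ (m + H - 1)) / (1 - alpha) * deltaFV + deltaApp + deltaFV * epsPE)
           + c * alphaGD ^ eta / (1 - alpha))"
    unfolding pow k diff_Suc_1 J_def gd[of n] T_def Tp_def Jv_def c_def
    by (rule api_step_error[OF rankD params(4) FV app GD w_bound])
qed

end
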